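(* Let $A\in\mathbb{C}^{n\times n}_r$ be represented by its Hartwig-Spindelb\"{o}ck decomposition $A=U\left(\begin{array}{cc}\Sigma K & \Sigma L\\ 0 & 0\end{array}\right)U^*$, where $U\in\mathbb{C}^{n\times n}$ is unitary, $\Sigma={\rm diag}(\sigma_1,\dots,\sigma_r)$ is the diagonal matrix of the (positive) singular values of $A$, and $K\in\mathbb{C}^{r\times r}$, $L\in\mathbb{C}^{r\times(n-r)}$ satisfy $KK^*+LL^*=I_r$. Write $\left(\begin{array}{cc}G_1 & G_2\\ G_3 & G_4\end{array}\right)=U^*GU$ with $G_1\in\mathbb{C}^{r\times r}$, $G_2\in\mathbb{C}^{r\times(n-r)}$, $G_3\in\mathbb{C}^{(n-r)\times r}$, $G_4\in\mathbb{C}^{(n-r)\times(n-r)}$, and let $\Delta=\left(\begin{array}{cc}K & L\end{array}\right)U^*GU\left(\begin{array}{c}K^*\\ L^*\end{array}\right)$. Then: \begin{enumerate}[$(1)$] \item ${\rm rank}(A)={\rm rank}(AA^{\sim})$ if and only if $\Delta$ is nonsingular. \item ${\rm rank}(A)={\rm rank}(A^{\sim}A)$ if and only if $G_1$ is nonsingular. \item If $\Delta$ and $G_1$ are nonsingular, then \begin{align*} A^{\mathfrak{m}}&=GU\left(\begin{array}{cc}K^*(G_1\Sigma\Delta)^{-1} & 0\\ L^*(G_1\Sigma\Delta)^{-1} & 0\end{array}\right)U^*G\\ &=U\left(\begin{array}{cc}(G_1K^*+G_2L^* )(\Sigma\Delta)^{-1} & (G_1K^*+G_2L^* )(G_1\Sigma\Delta)^{-1}G_2\\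 (G_3K^*+G_4L^* )(\Sigma\Delta)^{-1} & (G_3K^*+G_4L^* )(G_1\Sigma\Delta)^{-1}G_2\end{array}\right)U^*. \end{align*} \end{enumerate}
   Context: $G=\left(\begin{array}{cc}1&0\\0&-I_{n-1}\end{array}\right)$ is the Minkowski metric matrix of order $n$; the Minkowski adjoint of $A\in\mathbb{C}^{m\times n}$ is $A^{\sim}=GA^*F$ with $G,F$ the Minkowski metric matrices of orders $n$ and $m$. The Minkowski inverse $A^{\mathfrak{m}}$ of $A$ is the unique $X$ (when it exists) with $AXA=A$, $XAX=X$, $(AX)^{\sim}=AX$, $(XA)^{\sim}=XA$. *)

theory Defs
  imports "Jordan_Normal_Form.Schur_Decomposition" "Jordan_Normal_Form.DL_Rank"
begin

text \<open>Conjugate transpose: the library's mat_adjoint (Schur_Decomposition).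
  Rank: the library's vec_space.rank (DL_Rank), with parameter = number of rows.\<close>

definition unitary_mat :: "nat \<Rightarrow> complex mat \<Rightarrow> bool" where
  "unitary_mat n U \<longleftrightarrow> U \<in> carrier_mat n n \<and> U * mat_adjoint U = 1\<^sub>m n \<and> mat_adjoint U * U = 1\<^sub>m n"

definition mat_inv :: "complex mat \<Rightarrow> complex mat" where
  "mat_inv A = (THE B. B \<in> carrier_mat (dim_row A) (dim_row A) \<and> inverts_mat A B \<and> inverts_mat B A)"

definition mink_G :: "nat \<Rightarrow> complex mat" where
  "mink_G n = mat n n (\<lambda>(i,j). if i = j then (if i = 0 then 1 else -1) else 0)"

definition mink_adj :: "complex mat \<Rightarrow> complex mat" where
  "mink_adj A = mink_G (dim_col A) * mat_adjoint A * mink_G (dim_row A)"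

definition is_mink_inv :: "complex mat \<Rightarrow> complex mat \<Rightarrow> bool" where
  "is_mink_inv A X \<longleftrightarrow> X \<in> carrier_mat (dim_col A) (dim_row A) \<and>
     A * X * A = A \<and> X * A * X = X \<and> mink_adj (A * X) = A * X \<and> mink_adj (X * A) = X * A"

definition mink_inv :: "complex mat \<Rightarrow> complex mat" where
  "mink_inv A = (THE X. is_mink_inv A X)"

end

theory Submission
  imports Defs
begin

text \<open>
  The Hartwig-Spindelboeck form is a full-rank factorization \<open>A = F H\<close> with
  \<open>F = U [I; 0] \<Sigma>\<close> (left invertible, as \<open>\<Sigma>\<close> is) and \<open>H = [K L] U\<^sup>*\<close>
  (right invertible, as \<open>K K\<^sup>* + L L\<^sup>* = I\<close>). For the Minkowski metric \<open>G\<close>,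
  \<open>A A\<^sup>\<sim> = F (H G H\<^sup>*) (F\<^sup>* G)\<close> and \<open>A\<^sup>\<sim> A = (G H\<^sup>*) (F\<^sup>* G F) H\<close>; the outer factors
  are one-sided invertible, so these products have rank \<open>r\<close> exactly when the
  \<open>r \<times> r\<close> Gram matrices \<open>H G H\<^sup>* = \<Delta>\<close> and \<open>F\<^sup>* G F = \<Sigma> G\<^sub>1 \<Sigma>\<close> are invertible.
  Then \<open>X = G H\<^sup>* (H G H\<^sup>*)\<^sup>-\<^sup>1 (F\<^sup>* G F)\<^sup>-\<^sup>1 F\<^sup>* G\<close> is the Minkowski inverse:
  \<open>A X = F (F\<^sup>* G F)\<^sup>-\<^sup>1 F\<^sup>* G\<close> and \<open>X A = G H\<^sup>* (H G H\<^sup>*)\<^sup>-\<^sup>1 H\<close> are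
  \<open>G\<close>-selfadjoint because both Gram matrices are Hermitian. Expanding \<open>X\<close> in the
  blocks of \<open>U\<^sup>* G U\<close> gives the two formulas.
\<close>

lemma assoc_mult_mat_dim:
  "dim_col (A :: 'a :: semiring_0 mat) = dim_row B \<Longrightarrow> dim_col B = dim_row C \<Longrightarrow> A * B * C = A * (B * C)"
  by (rule assoc_mult_mat[of A "dim_row A" "dim_col A" B "dim_col B" C "dim_col C"]) auto

lemma dim_row_mat_diag [simp]: "dim_row (mat_diag n f) = n"
  and dim_col_mat_diag [simp]: "dim_col (mat_diag n f) = n"
  unfolding mat_diag_def by simp_all

lemma dim_row_mat_adjoint [simp]: "dim_row (mat_adjoint A) = dim_col A"
  and dim_col_mat_adjoint [simp]: "dim_col (mat_adjoint A) = dim_row A"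
  unfolding mat_adjoint_def by auto

lemma index_mat_adjoint [simp]:
  "i < dim_col A \<Longrightarrow> j < dim_row A \<Longrightarrow> mat_adjoint A $$ (i, j) = conjugate (A $$ (j, i))"
  unfolding mat_adjoint_def by (simp add: mat_of_rows_def)

lemma mat_adjoint_carrier [simp]: "A \<in> carrier_mat m n \<Longrightarrow> mat_adjoint A \<in> carrier_mat n m"
  by (intro carrier_matI) auto

lemma mat_adjoint_adjoint [simp]: "mat_adjoint (mat_adjoint A) = A"
  by (rule eq_matI) auto

lemma row_mat_adjoint: "i < dim_col A \<Longrightarrow> row (mat_adjoint A) i = conjugate (col A i)"
  by (rule eq_vecI) auto

lemma col_mat_adjoint: "j < dim_row A \<Longrightarrow> col (mat_adjoint A) j = conjugate (row A j)"
  by (rule eq_vecI) auto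

lemma mat_adjoint_mult:
  fixes A B :: "'a :: conjugatable_field mat"
  assumes "dim_col A = dim_row B"
  shows "mat_adjoint (A * B) = mat_adjoint B * mat_adjoint A"
proof (rule eq_matI)
  fix i j assume "i < dim_row (mat_adjoint B * mat_adjoint A)" "j < dim_col (mat_adjoint B * mat_adjoint A)"
  then have i: "i < dim_col B" and j: "j < dim_row A" by auto
  have "mat_adjoint (A * B) $$ (i, j) = conjugate (row A j \<bullet> col B i)"
    using i j assms by simp
  also have "\<dots> = conjugate (row A j) \<bullet> conjugate (col B i)"
    by (rule conjugate_sprod_vec[of _ "dim_row B"]) (use assms in \<open>auto intro: carrier_vecI\<close>)
  also have "\<dots> = conjugate (col B i) \<bullet> conjugate (row A j)"
    by (rule comm_scalar_prod[of _ "dim_row B"]) (use assms in \<open>auto intro: carrier_vecI\<close>)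
  finally show "mat_adjoint (A * B) $$ (i, j) = (mat_adjoint B * mat_adjoint A) $$ (i, j)"
    using i j by (simp add: row_mat_adjoint col_mat_adjoint)
qed auto

lemma conjugate_one [simp]: "conjugate (1 :: 'a :: conjugatable_field) = 1"
proof -
  have "conjugate (1 :: 'a) = conjugate 1 * conjugate (conjugate 1)" by simp
  also have "\<dots> = conjugate (1 * conjugate 1)" by (rule conjugate_dist_mul[symmetric])
  finally show ?thesis by simp
qed

lemma mat_adjoint_one [simp]: "mat_adjoint (1\<^sub>m n :: 'a :: conjugatable_field mat) = 1\<^sub>m n"
  by (rule eq_matI) auto

lemma mat_adjoint_zero [simp]: "mat_adjoint (0\<^sub>m m n :: 'a :: conjugatable_field mat) = 0\<^sub>m n m"
  by (rule eq_matI) auto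

lemma mat_adjoint_four_block_mat:
  "dim_row A = dim_row B \<Longrightarrow> dim_row C = dim_row D \<Longrightarrow> dim_col A = dim_col C \<Longrightarrow> dim_col B = dim_col D \<Longrightarrow>
   mat_adjoint (four_block_mat A B C D) = four_block_mat (mat_adjoint A) (mat_adjoint C) (mat_adjoint B) (mat_adjoint D)"
  by (rule eq_matI) auto

lemma invertible_mat_iff_det:
  fixes M :: "'a :: field mat"
  assumes M: "M \<in> carrier_mat n n"
  shows "invertible_mat M \<longleftrightarrow> det M \<noteq> 0"
proof
  assume "invertible_mat M"
  then obtain B where MB: "M * B = 1\<^sub>m n" and BM: "B * M = 1\<^sub>m (dim_row B)"
    using M unfolding invertible_mat_def inverts_mat_def by auto
  have B: "B \<in> carrier_mat n n"
  proof (rule carrier_matI)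
    show "dim_col B = n" using arg_cong[OF MB, of dim_col] by simp
    show "dim_row B = n"
      using arg_cong[OF BM, of dim_col] M by (metis carrier_matD(2) index_mult_mat(3) index_one_mat(3))
  qed
  from det_mult[OF M B] MB have "det M * det B = 1" by simp
  then show "det M \<noteq> 0" by auto
next
  assume "det M \<noteq> 0"
  then obtain B where "B \<in> carrier_mat n n" "M * B = 1\<^sub>m n" "B * M = 1\<^sub>m n"
    using det_non_zero_imp_unit[OF M] unfolding Units_def ring_mat_def by auto
  then show "invertible_mat M"
    using M unfolding invertible_mat_def inverts_mat_def by auto
qed

lemma invertible_mat_mult_iff:
  fixes A B :: "'a :: field mat"
  assumes "A \<in> carrier_mat n n" "B \<in> carrier_mat n n"
  shows "invertible_mat (A * B) \<longleftrightarrow> invertible_mat A \<and> invertible_mat B"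
  using assms by (simp add: invertible_mat_iff_det[of _ n] det_mult)

lemma invertible_mat_left_inverse:
  fixes M :: "'a :: field mat"
  assumes "M \<in> carrier_mat n n" "B \<in> carrier_mat n n" "B * M = 1\<^sub>m n"
  shows "invertible_mat M"
  using assms mat_mult_left_right_inverse[OF assms(2,1,3)]
  unfolding invertible_mat_def inverts_mat_def by auto

lemma mat_inv_eqI:
  assumes M: "M \<in> carrier_mat n n" and B: "B \<in> carrier_mat n n" and BM: "B * M = 1\<^sub>m n"
  shows "mat_inv M = B"
  unfolding mat_inv_def
proof (rule the_equality)
  show "B \<in> carrier_mat (dim_row M) (dim_row M) \<and> inverts_mat M B \<and> inverts_mat B M"
    using M B BM mat_mult_left_right_inverse[OF B M BM] by (auto simp: inverts_mat_def)
  fix C assume "C \<in> carrier_mat (dim_row M) (dim_row M) \<and> inverts_mat M C \<and> inverts_mat C M"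
  then have C: "C \<in> carrier_mat n n" and MC: "M * C = 1\<^sub>m n"
    using M by (auto simp: inverts_mat_def)
  have "C = (B * M) * C" using C BM by simp
  also have "\<dots> = B" using B M C MC by simp
  finally show "C = B" .
qed

lemma mat_inv:
  assumes M: "M \<in> carrier_mat n n" and inv: "invertible_mat M"
  shows mat_inv_carrier: "mat_inv M \<in> carrier_mat n n"
    and mat_inv_left: "mat_inv M * M = 1\<^sub>m n"
    and mat_inv_right: "M * mat_inv M = 1\<^sub>m n"
proof -
  obtain B where B: "B \<in> carrier_mat n n" "B * M = 1\<^sub>m n" "M * B = 1\<^sub>m n"
    using det_non_zero_imp_unit[OF M] inv invertible_mat_iff_det[OF M]
    unfolding Units_def ring_mat_def by auto
  then show "mat_inv M \<in> carrier_mat n n" "mat_inv M * M = 1\<^sub>m n" "M * mat_inv M = 1\<^sub>m n"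
    using mat_inv_eqI[OF M B(1,2)] by auto
qed

lemma mat_adjoint_mat_inv_hermitian:
  assumes M: "M \<in> carrier_mat n n" and inv: "invertible_mat M" and herm: "mat_adjoint M = M"
  shows "mat_adjoint (mat_inv M) = mat_inv M"
proof -
  have "mat_adjoint (mat_inv M) * M = mat_adjoint (M * mat_inv M)"
    using mat_inv_carrier[OF M inv] M herm by (simp add: mat_adjoint_mult)
  then show ?thesis
    using mat_inv_eqI[OF M, of "mat_adjoint (mat_inv M)"] mat_inv[OF M inv] by simp
qed

section \<open>Rank\<close>

lemma mult_mat_vec_unit_vec:
  fixes A :: "'a :: semiring_1 mat"
  assumes "A \<in> carrier_mat n nc" "i < nc"
  shows "A *\<^sub>v unit_vec nc i = col A i"
proof -
  have "col (A * 1\<^sub>m nc) i = A *\<^sub>v col (1\<^sub>m nc) i"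
    by (rule col_mult2[OF assms(1) one_carrier_mat assms(2)])
  then show ?thesis unfolding right_mult_one_mat[OF assms(1)] col_one[OF assms(2)] by simp
qed

lemma mult_mat_vec_zero: "A \<in> carrier_mat n m \<Longrightarrow> A *\<^sub>v 0\<^sub>v m = 0\<^sub>v n"
  by (intro eq_vecI) auto

lemma (in vec_space) rank_mult_left_le:
  assumes X: "X \<in> carrier_mat n k" and Y: "Y \<in> carrier_mat k m"
  shows "rank (X * Y) \<le> rank X"
proof -
  let ?S = "span (set (cols X))"
  have XY_cols: "set (cols (X * Y)) \<subseteq> ?S"
  proof
    fix v assume "v \<in> set (cols (X * Y))"
    then obtain j where j: "j < m" "v = col (X * Y) j" using X Y
      by (metis cols_length cols_nth in_set_conv_nth index_mult_mat(3) carrier_matD(2))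
    then have "v = X *\<^sub>v col Y j" "col Y j \<in> carrier_vec k" using X Y by auto
    then show "v \<in> ?S" unfolding col_space_def[symmetric] col_space_eq[OF X] using X by auto
  qed
  have X_cols: "set (cols X) \<subseteq> carrier_vec n" using X cols_dim by (metis carrier_matD(1))
  have vs: "vectorspace class_ring (vs ?S)"
    using span_is_subspace[THEN subspace_is_vs, OF X_cols] by auto
  have sub: "VectorSpace.subspace class_ring (span (set (cols (X * Y)))) (vs ?S)"
    using vectorspace.span_is_subspace[OF vs, of "set (cols (X * Y))", unfolded
      span_li_not_depend(1)[OF XY_cols span_is_submodule[OF X_cols]]] XY_cols by auto
  have "vectorspace.fin_dim class_ring (vs ?S)"
       "vectorspace.fin_dim class_ring (vs ?S\<lparr>carrier := span (set (cols (X * Y)))\<rparr>)"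
    using fin_dim_span_cols X mult_carrier_mat[OF X Y] by auto
  then show ?thesis unfolding rank_def using vectorspace.subspace_dim[OF vs sub] by simp
qed

lemma (in vec_space) rank_mult_right_inverse:
  assumes B: "B \<in> carrier_mat n k" and T: "T \<in> carrier_mat k m" and T': "T' \<in> carrier_mat m k"
    and TT': "T * T' = 1\<^sub>m k"
  shows "rank (B * T) = rank B"
proof (rule antisym)
  show "rank (B * T) \<le> rank B" by (rule rank_mult_left_le[OF B T])
  have "rank B = rank (B * T * T')" using B T T' TT' by simp
  also have "\<dots> \<le> rank (B * T)" by (rule rank_mult_left_le[OF _ T']) (use B T in simp)
  finally show "rank B \<le> rank (B * T)" .
qed

lemma (in vec_space) rank_le_card_cols:
  assumes A: "A \<in> carrier_mat n nc"
  shows "rank A \<le> card (set (cols A))"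
proof -
  obtain S where S: "maximal S (\<lambda>T. T \<subseteq> set (cols A) \<and> lin_indpt T)"
    using maximal_exists[of "\<lambda>T. T \<subseteq> set (cols A) \<and> lin_indpt T" "card (set (cols A))" "{}"]
    by (meson List.finite_set card_mono empty_iff empty_subsetI finite_lin_indpt2 rev_finite_subset)
  then have "card S \<le> card (set (cols A))" by (simp add: card_mono maximal_def)
  then show ?thesis using rank_card_indpt[OF A S] by simp
qed

lemma (in vec_space) full_rank_iff_trivial_kernel:
  assumes A: "A \<in> carrier_mat n nc"
  shows "rank A = nc \<longleftrightarrow> (\<forall>v \<in> carrier_vec nc. A *\<^sub>v v = 0\<^sub>v n \<longrightarrow> v = 0\<^sub>v nc)"
proof
  assume rk: "rank A = nc"
  have "distinct (cols A)"
  proof (rule ccontr)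
    assume "\<not> distinct (cols A)"
    then have "card (set (cols A)) \<noteq> length (cols A)" using card_distinct by blast
    then have "card (set (cols A)) < nc"
      using card_length[of "cols A"] cols_length[of A] carrier_matD(2)[OF A] by linarith
    with rank_le_card_cols[OF A] rk show False by simp
  qed
  with rk have "lin_indpt (set (cols A))" using full_rank_lin_indpt[OF A] by simp
  then show "\<forall>v \<in> carrier_vec nc. A *\<^sub>v v = 0\<^sub>v n \<longrightarrow> v = 0\<^sub>v nc"
    using lin_depI[OF A] \<open>distinct (cols A)\<close> by blast
next
  assume ker: "\<forall>v \<in> carrier_vec nc. A *\<^sub>v v = 0\<^sub>v n \<longrightarrow> v = 0\<^sub>v nc"
  have "distinct (cols A)"
  proof (rule ccontr)
    assume "\<not> distinct (cols A)"
    then obtain i j where ij: "i \<noteq> j" "i < nc" "j < nc" "col A i = col A j"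
      using A by (auto simp: distinct_conv_nth)
    define v :: "'a vec" where "v = unit_vec nc i - unit_vec nc j"
    have v: "v \<in> carrier_vec nc" unfolding v_def by simp
    have "A *\<^sub>v v = col A i - col A j"
      unfolding v_def using A ij by (simp add: mult_minus_distrib_mat_vec mult_mat_vec_unit_vec)
    then have "A *\<^sub>v v = 0\<^sub>v n" using A ij by simp
    moreover have "v $ i \<noteq> 0" using ij unfolding v_def by simp
    ultimately show False using ker v ij(2) by auto
  qed
  moreover have "lin_indpt (set (cols A))"
    using lin_depE[OF A _ \<open>distinct (cols A)\<close>] ker by metis
  ultimately show "rank A = nc" by (rule lin_indpt_full_rank[OF A])
qed

lemma (in vec_space) rank_sandwich_eq_iff_invertible:
  assumes S: "S \<in> carrier_mat n r" and S': "S' \<in> carrier_mat r n" and SS': "S' * S = 1\<^sub>m r"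
    and M: "M \<in> carrier_mat r r"
    and T: "T \<in> carrier_mat r m" and T': "T' \<in> carrier_mat m r" and TT': "T * T' = 1\<^sub>m r"
  shows "rank (S * M * T) = r \<longleftrightarrow> invertible_mat M"
proof -
  have S_inj: "S *\<^sub>v w = 0\<^sub>v n \<longleftrightarrow> w = 0\<^sub>v r" if "w \<in> carrier_vec r" for w
  proof
    assume Sw: "S *\<^sub>v w = 0\<^sub>v n"
    have "w = (S' * S) *\<^sub>v w" using SS' that by simp
    also have "\<dots> = S' *\<^sub>v 0\<^sub>v n" using S S' that Sw by simp
    also have "\<dots> = 0\<^sub>v r" by (rule mult_mat_vec_zero[OF S'])
    finally show "w = 0\<^sub>v r" .
  qed (use mult_mat_vec_zero[OF S] in simp)
  have "rank (S * M * T) = rank (S * M)"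
    by (rule rank_mult_right_inverse[OF _ T T' TT']) (use S M in simp)
  also have "\<dots> = r \<longleftrightarrow> (\<forall>v \<in> carrier_vec r. M *\<^sub>v v = 0\<^sub>v r \<longrightarrow> v = 0\<^sub>v r)"
    using full_rank_iff_trivial_kernel[of "S * M" r] S M S_inj by (simp add: assoc_mult_mat_vec)
  also have "\<dots> \<longleftrightarrow> invertible_mat M"
    using det_0_iff_vec_prod_zero_field[OF M] invertible_mat_iff_det[OF M] by blast
  finally show ?thesis .
qed

section \<open>Block matrices\<close>

lemma four_block_mat_empty_blocks: "M \<in> carrier_mat m k \<Longrightarrow> four_block_mat M (0\<^sub>m m 0) (0\<^sub>m 0 k) (0\<^sub>m 0 0) = M"
  by (rule eq_matI) auto

lemma row_block_mult_col_block:
  fixes A :: "'a :: semiring_0 mat"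
  assumes "A \<in> carrier_mat m k" "B \<in> carrier_mat m l" "C \<in> carrier_mat k p" "D \<in> carrier_mat l p"
  shows "four_block_mat A B (0\<^sub>m 0 k) (0\<^sub>m 0 l) * four_block_mat C (0\<^sub>m k 0) D (0\<^sub>m l 0) = A * C + B * D"
proof -
  have "four_block_mat A B (0\<^sub>m 0 k) (0\<^sub>m 0 l) * four_block_mat C (0\<^sub>m k 0) D (0\<^sub>m l 0)
      = four_block_mat (A * C + B * D) (0\<^sub>m m 0) (0\<^sub>m 0 p) (0\<^sub>m 0 0)"
    by (subst mult_four_block_mat[of _ m k _ l _ 0]) (use assms in \<open>auto intro!: cong_four_block_mat\<close>)
  then show ?thesis using assms by (simp add: four_block_mat_empty_blocks)
qed

lemma col_block_mult_row_block:
  fixes A :: "'a :: semiring_0 mat"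
  assumes "A \<in> carrier_mat m l" "C \<in> carrier_mat k l" "B \<in> carrier_mat l p" "D \<in> carrier_mat l q"
  shows "four_block_mat A (0\<^sub>m m 0) C (0\<^sub>m k 0) * four_block_mat B D (0\<^sub>m 0 p) (0\<^sub>m 0 q)
    = four_block_mat (A * B) (A * D) (C * B) (C * D)"
  by (subst mult_four_block_mat[of _ m l _ 0 _ k]) (use assms in \<open>auto intro!: cong_four_block_mat\<close>)

lemma mult_row_block:
  fixes M :: "'a :: semiring_0 mat"
  assumes "M \<in> carrier_mat m l" "B \<in> carrier_mat l p" "D \<in> carrier_mat l q"
  shows "M * four_block_mat B D (0\<^sub>m 0 p) (0\<^sub>m 0 q) = four_block_mat (M * B) (M * D) (0\<^sub>m 0 p) (0\<^sub>m 0 q)"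
proof -
  have "M * four_block_mat B D (0\<^sub>m 0 p) (0\<^sub>m 0 q)
      = four_block_mat M (0\<^sub>m m 0) (0\<^sub>m 0 l) (0\<^sub>m 0 0) * four_block_mat B D (0\<^sub>m 0 p) (0\<^sub>m 0 q)"
    using assms by (simp add: four_block_mat_empty_blocks)
  also have "\<dots> = four_block_mat (M * B) (M * D) (0\<^sub>m 0 p) (0\<^sub>m 0 q)"
    by (subst mult_four_block_mat[of _ m l _ 0 _ 0]) (use assms in \<open>auto intro!: cong_four_block_mat\<close>)
  finally show ?thesis .
qed

lemma row_block_mult_four_block_mat:
  fixes A :: "'a :: semiring_0 mat"
  assumes "A \<in> carrier_mat m k" "B \<in> carrier_mat m l"
    "P \<in> carrier_mat k p" "Q \<in> carrier_mat k q" "R \<in> carrier_mat l p" "S \<in> carrier_mat l q"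
  shows "four_block_mat A B (0\<^sub>m 0 k) (0\<^sub>m 0 l) * four_block_mat P Q R S
    = four_block_mat (A * P + B * R) (A * Q + B * S) (0\<^sub>m 0 p) (0\<^sub>m 0 q)"
  by (subst mult_four_block_mat[of _ m k _ l _ 0]) (use assms in \<open>auto intro!: cong_four_block_mat\<close>)

lemma four_block_mat_mult_col_block:
  fixes A :: "'a :: semiring_0 mat"
  assumes "P \<in> carrier_mat m k" "Q \<in> carrier_mat m l" "R \<in> carrier_mat p k" "S \<in> carrier_mat p l"
    "A \<in> carrier_mat k q" "C \<in> carrier_mat l q"
  shows "four_block_mat P Q R S * four_block_mat A (0\<^sub>m k 0) C (0\<^sub>m l 0)
    = four_block_mat (P * A + Q * C) (0\<^sub>m m 0) (R * A + S * C) (0\<^sub>m p 0)"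
  by (subst mult_four_block_mat[of _ m k _ l _ p]) (use assms in \<open>auto intro!: cong_four_block_mat\<close>)

section \<open>The Minkowski inverse of a full-rank factorization\<close>

lemma dim_row_mink_G [simp]: "dim_row (mink_G n) = n"
  and dim_col_mink_G [simp]: "dim_col (mink_G n) = n"
  unfolding mink_G_def by simp_all

lemma mink_G_carrier [simp]: "mink_G n \<in> carrier_mat n n"
  by (intro carrier_matI) simp_all

lemma mink_G_mult_mink_G [simp]: "mink_G n * mink_G n = 1\<^sub>m n"
proof (rule eq_matI)
  fix i j assume "i < dim_row (1\<^sub>m n :: complex mat)" "j < dim_col (1\<^sub>m n :: complex mat)"
  then have ij: "i < n" "j < n" by auto
  have "(mink_G n * mink_G n) $$ (i, j) = (\<Sum>l<n. mink_G n $$ (i, l) * mink_G n $$ (l, j))"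
    using ij by (simp add: scalar_prod_def atLeast0LessThan)
  also have "\<dots> = (\<Sum>l<n. if l = i then mink_G n $$ (i, i) * mink_G n $$ (i, j) else 0)"
    by (rule sum.cong) (auto simp: mink_G_def ij)
  also have "\<dots> = 1\<^sub>m n $$ (i, j)" using ij by (auto simp: mink_G_def)
  finally show "(mink_G n * mink_G n) $$ (i, j) = 1\<^sub>m n $$ (i, j)" .
qed auto

lemma mink_G_mult_mink_G_mult [simp]: "dim_row Z = n \<Longrightarrow> mink_G n * (mink_G n * Z) = Z"
  by (simp add: assoc_mult_mat_dim[symmetric] left_mult_one_mat')

lemma mat_adjoint_mink_G [simp]: "mat_adjoint (mink_G n) = mink_G n"
  by (rule eq_matI) (auto simp: mink_G_def)

lemma mink_adj_square: "A \<in> carrier_mat n n \<Longrightarrow> mink_adj A = mink_G n * mat_adjoint A * mink_G n"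
  unfolding mink_adj_def by auto

lemma mink_adj_mult:
  assumes A: "A \<in> carrier_mat n n" and B: "B \<in> carrier_mat n n"
  shows "mink_adj (A * B) = mink_adj B * mink_adj A"
proof -
  let ?G = "mink_G n"
  have "mink_adj (A * B) = ?G * mat_adjoint B * (?G * ?G) * mat_adjoint A * ?G"
    using carrier_matD[OF A] carrier_matD[OF B]
    by (simp add: mink_adj_square[OF mult_carrier_mat[OF A B]] mat_adjoint_mult assoc_mult_mat_dim)
  also have "\<dots> = mink_adj B * mink_adj A"
    using carrier_matD[OF A] carrier_matD[OF B] by (simp add: mink_adj_square[OF A] mink_adj_square[OF B] assoc_mult_mat_dim)
  finally show ?thesis .
qed

lemma mink_inv_unique:
  assumes A: "A \<in> carrier_mat n n" and X: "is_mink_inv A X" and Y: "is_mink_inv A Y"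
  shows "X = Y"
proof -
  let ?a = mink_adj
  have XY: "X \<in> carrier_mat n n" "Y \<in> carrier_mat n n"
    using A X Y unfolding is_mink_inv_def by auto
  have adj: "?a M \<in> carrier_mat n n" if "M \<in> carrier_mat n n" for M
    using carrier_matD[OF that] by (intro carrier_matI) (simp_all add: mink_adj_def)
  note dims = carrier_matD[OF A] carrier_matD[OF XY(1)] carrier_matD[OF XY(2)]
    carrier_matD[OF adj[OF A]] carrier_matD[OF adj[OF XY(1)]] carrier_matD[OF adj[OF XY(2)]]
  note adj_mult = mink_adj_mult[OF A XY(1)] mink_adj_mult[OF A XY(2)]
    mink_adj_mult[OF XY(1) A] mink_adj_mult[OF XY(2) A]
  note XX = X[unfolded is_mink_inv_def] and YY = Y[unfolded is_mink_inv_def]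
  have adj_A_left: "?a A = ?a A * ?a (A * X)"
    using XX mink_adj_mult[OF mult_carrier_mat[OF A XY(1)] A] A XY by (metis assoc_mult_mat)
  have adj_A_right: "?a A = ?a (Y * A) * ?a A"
    using YY mink_adj_mult[OF A mult_carrier_mat[OF XY(2) A]] A XY by (metis assoc_mult_mat)
  have "X = X * ?a (A * X)" using XX dims by (simp add: assoc_mult_mat_dim)
  also have "\<dots> = X * ?a X * (?a (Y * A) * ?a A)" using adj_mult adj_A_right dims by (simp add: assoc_mult_mat_dim)
  also have "\<dots> = X * ?a (A * X) * ?a (A * Y)" using adj_mult dims by (simp add: assoc_mult_mat_dim)
  also have "\<dots> = X * A * Y" using XX YY dims by (simp add: assoc_mult_mat_dim)
  finally have X_eq: "X = X * A * Y" .
  have "Y = ?a (Y * A) * Y" using YY dims by (simp add: assoc_mult_mat_dim)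
  also have "\<dots> = ?a A * ?a (A * X) * ?a Y * Y" using adj_mult adj_A_left dims by (simp add: assoc_mult_mat_dim)
  also have "\<dots> = ?a (X * A) * ?a (Y * A) * Y" using adj_mult dims by (simp add: assoc_mult_mat_dim)
  also have "\<dots> = X * A * Y" using XX YY dims by (simp add: assoc_mult_mat_dim)
  finally show ?thesis using X_eq by simp
qed

lemma mink_inv_eqI: "A \<in> carrier_mat n n \<Longrightarrow> is_mink_inv A X \<Longrightarrow> mink_inv A = X"
  unfolding mink_inv_def using mink_inv_unique by blast

lemma is_mink_inv_factorization:
  fixes n r :: nat and F H :: "complex mat"
  defines "G \<equiv> mink_G n"
  defines "M\<^sub>1 \<equiv> mat_adjoint F * G * F" and "M\<^sub>2 \<equiv> H * G * mat_adjoint H"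
  assumes F: "F \<in> carrier_mat n r" and H: "H \<in> carrier_mat r n"
    and inv\<^sub>1: "invertible_mat M\<^sub>1" and inv\<^sub>2: "invertible_mat M\<^sub>2"
  shows "is_mink_inv (F * H) (G * mat_adjoint H * mat_inv M\<^sub>2 * mat_inv M\<^sub>1 * mat_adjoint F * G)"
proof -
  have M\<^sub>1: "M\<^sub>1 \<in> carrier_mat r r" and M\<^sub>2: "M\<^sub>2 \<in> carrier_mat r r"
    using F H unfolding M\<^sub>1_def M\<^sub>2_def G_def by auto
  define N\<^sub>1 N\<^sub>2 where "N\<^sub>1 = mat_inv M\<^sub>1" and "N\<^sub>2 = mat_inv M\<^sub>2"
  define X where "X = G * mat_adjoint H * N\<^sub>2 * N\<^sub>1 * mat_adjoint F * G"
  note N\<^sub>1 = mat_inv[OF M\<^sub>1 inv\<^sub>1, folded N\<^sub>1_def] and N\<^sub>2 = mat_inv[OF M\<^sub>2 inv\<^sub>2, folded N\<^sub>2_def]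
  have "mat_adjoint M\<^sub>1 = M\<^sub>1" "mat_adjoint M\<^sub>2 = M\<^sub>2"
    using carrier_matD[OF F] carrier_matD[OF H]
    by (simp_all add: M\<^sub>1_def M\<^sub>2_def G_def mat_adjoint_mult assoc_mult_mat_dim)
  then have herm: "mat_adjoint N\<^sub>1 = N\<^sub>1" "mat_adjoint N\<^sub>2 = N\<^sub>2"
    unfolding N\<^sub>1_def N\<^sub>2_def using M\<^sub>1 M\<^sub>2 inv\<^sub>1 inv\<^sub>2 by (simp_all add: mat_adjoint_mat_inv_hermitian)
  note dims = carrier_matD[OF F] carrier_matD[OF H] carrier_matD[OF N\<^sub>1(1)] carrier_matD[OF N\<^sub>2(1)]
  have X: "X \<in> carrier_mat n n" using F H N\<^sub>1 N\<^sub>2 unfolding X_def G_def by auto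
  have AX: "F * H * X = F * N\<^sub>1 * mat_adjoint F * G"
  proof -
    have "F * H * X = F * (M\<^sub>2 * N\<^sub>2) * N\<^sub>1 * mat_adjoint F * G"
      unfolding X_def M\<^sub>2_def G_def using dims by (simp add: assoc_mult_mat_dim)
    then show ?thesis using N\<^sub>2(3) dims by simp
  qed
  have XA: "X * (F * H) = G * mat_adjoint H * N\<^sub>2 * H"
  proof -
    have "X * (F * H) = G * mat_adjoint H * N\<^sub>2 * (N\<^sub>1 * M\<^sub>1) * H"
      unfolding X_def M\<^sub>1_def G_def using dims by (simp add: assoc_mult_mat_dim)
    then show ?thesis using N\<^sub>1(2) dims by simp
  qed
  have "F * H * X * (F * H) = F * (N\<^sub>1 * M\<^sub>1) * H"
    unfolding AX M\<^sub>1_def G_def using dims by (simp add: assoc_mult_mat_dim)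
  then have AXA: "F * H * X * (F * H) = F * H" using N\<^sub>1(2) dims by simp
  have "X * (F * H) * X = G * mat_adjoint H * (N\<^sub>2 * M\<^sub>2) * N\<^sub>2 * N\<^sub>1 * mat_adjoint F * G"
    unfolding XA unfolding X_def M\<^sub>2_def G_def using dims by (simp add: assoc_mult_mat_dim)
  then have XAX: "X * (F * H) * X = X" unfolding X_def using N\<^sub>2(2) dims by simp
  have "mink_adj (F * H * X) = F * H * X"
    unfolding AX using F N\<^sub>1 dims
    by (simp add: mink_adj_def G_def mat_adjoint_mult herm assoc_mult_mat_dim)
  moreover have "mink_adj (X * (F * H)) = X * (F * H)"
    unfolding XA using H N\<^sub>2 dims
    by (simp add: mink_adj_def G_def mat_adjoint_mult herm assoc_mult_mat_dim)
  ultimately show ?thesis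
    unfolding is_mink_inv_def X_def[symmetric] N\<^sub>1_def[symmetric] N\<^sub>2_def[symmetric]
    using X F H AXA XAX by simp
qed

lemma rank_mult_mink_adj_factorization:
  fixes F H F' :: "complex mat"
  assumes F: "F \<in> carrier_mat n r" and H: "H \<in> carrier_mat r n"
    and F': "F' \<in> carrier_mat r n" and F'F: "F' * F = 1\<^sub>m r"
  shows "vec_space.rank n (F * H * mink_adj (F * H)) = r \<longleftrightarrow> invertible_mat (H * mink_G n * mat_adjoint H)"
proof -
  let ?G = "mink_G n"
  note dims = carrier_matD[OF F] carrier_matD[OF H] carrier_matD[OF F']
  have "F * H * mink_adj (F * H) = F * (H * ?G * mat_adjoint H) * (mat_adjoint F * ?G)"
    using dims by (simp add: mink_adj_def mat_adjoint_mult assoc_mult_mat_dim)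
  moreover have "mat_adjoint F * ?G * (?G * mat_adjoint F') = 1\<^sub>m r"
  proof -
    have "mat_adjoint F * mat_adjoint F' = 1\<^sub>m r"
      using mat_adjoint_mult[of F' F] F'F dims by simp
    then show ?thesis using dims by (simp add: assoc_mult_mat_dim)
  qed
  moreover have "H * ?G * mat_adjoint H \<in> carrier_mat r r" "mat_adjoint F * ?G \<in> carrier_mat r n"
    "?G * mat_adjoint F' \<in> carrier_mat n r"
    using F H F' by auto
  ultimately show ?thesis
    using vec_space.rank_sandwich_eq_iff_invertible[OF F F' F'F] by metis
qed

lemma rank_mink_adj_mult_factorization:
  fixes F H H' :: "complex mat"
  assumes F: "F \<in> carrier_mat n r" and H: "H \<in> carrier_mat r n"
    and H': "H' \<in> carrier_mat n r" and HH': "H * H' = 1\<^sub>m r"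
  shows "vec_space.rank n (mink_adj (F * H) * (F * H)) = r \<longleftrightarrow> invertible_mat (mat_adjoint F * mink_G n * F)"
proof -
  let ?G = "mink_G n"
  note dims = carrier_matD[OF F] carrier_matD[OF H] carrier_matD[OF H']
  have "mink_adj (F * H) * (F * H) = ?G * mat_adjoint H * (mat_adjoint F * ?G * F) * H"
    using dims by (simp add: mink_adj_def mat_adjoint_mult assoc_mult_mat_dim)
  moreover have "mat_adjoint H' * ?G * (?G * mat_adjoint H) = 1\<^sub>m r"
  proof -
    have "mat_adjoint H' * mat_adjoint H = 1\<^sub>m r"
      using mat_adjoint_mult[of H H'] HH' dims by simp
    then show ?thesis using dims by (simp add: assoc_mult_mat_dim)
  qed
  moreover have "?G * mat_adjoint H \<in> carrier_mat n r" "mat_adjoint H' * ?G \<in> carrier_mat r n"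
    "mat_adjoint F * ?G * F \<in> carrier_mat r r"
    using F H H' by auto
  ultimately show ?thesis
    using vec_space.rank_sandwich_eq_iff_invertible[of _ n r _ _ H n H'] H H' HH' by metis
qed

section \<open>The Hartwig-Spindelboeck decomposition\<close>

locale hartwig_spindelboeck =
  fixes n r :: nat and A U K L G\<^sub>1 G\<^sub>2 G\<^sub>3 G\<^sub>4 \<Sigma> \<Delta> :: "complex mat" and \<sigma> :: "nat \<Rightarrow> real"
  assumes r_le_n: "r \<le> n"
    and unitary: "unitary_mat n U"
    and \<sigma>_pos: "\<And>i. i < r \<Longrightarrow> \<sigma> i > 0"
    and K: "K \<in> carrier_mat r r" and L: "L \<in> carrier_mat r (n - r)"
    and KL: "K * mat_adjoint K + L * mat_adjoint L = 1\<^sub>m r"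
    and \<Sigma>_def: "\<Sigma> = mat_diag r (\<lambda>i. complex_of_real (\<sigma> i))"
    and A_def: "A = U * four_block_mat (\<Sigma> * K) (\<Sigma> * L) (0\<^sub>m (n - r) r) (0\<^sub>m (n - r) (n - r)) * mat_adjoint U"
    and G\<^sub>1: "G\<^sub>1 \<in> carrier_mat r r" and G\<^sub>2: "G\<^sub>2 \<in> carrier_mat r (n - r)"
    and G\<^sub>3: "G\<^sub>3 \<in> carrier_mat (n - r) r" and G\<^sub>4: "G\<^sub>4 \<in> carrier_mat (n - r) (n - r)"
    and G_blocks: "four_block_mat G\<^sub>1 G\<^sub>2 G\<^sub>3 G\<^sub>4 = mat_adjoint U * mink_G n * U"
    and \<Delta>_def: "\<Delta> = four_block_mat K L (0\<^sub>m 0 r) (0\<^sub>m 0 (n - r)) * (mat_adjoint U * mink_G n * U)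
                    * four_block_mat (mat_adjoint K) (0\<^sub>m r 0) (mat_adjoint L) (0\<^sub>m (n - r) 0)"
begin

definition E :: "complex mat" where
  "E = four_block_mat (1\<^sub>m r) (0\<^sub>m r 0) (0\<^sub>m (n - r) r) (0\<^sub>m (n - r) 0)"

definition P :: "complex mat" where
  "P = four_block_mat K L (0\<^sub>m 0 r) (0\<^sub>m 0 (n - r))"

definition W :: "complex mat" where "W = mat_adjoint U * mink_G n * U"

definition F :: "complex mat" where "F = U * E * \<Sigma>"

definition H :: "complex mat" where "H = P * mat_adjoint U"

lemma U_carrier: "U \<in> carrier_mat n n" and U_adjoint_U: "mat_adjoint U * U = 1\<^sub>m n"
  and U_U_adjoint: "U * mat_adjoint U = 1\<^sub>m n"
  using unitary unfolding unitary_mat_def by auto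

lemma \<Sigma>_carrier: "\<Sigma> \<in> carrier_mat r r"
  unfolding \<Sigma>_def by simp

lemma E_carrier: "E \<in> carrier_mat n r"
  unfolding E_def using r_le_n four_block_carrier_mat[of "1\<^sub>m r" r r "0\<^sub>m (n - r) 0" "n - r" 0] by simp

lemma P_carrier: "P \<in> carrier_mat r n"
  unfolding P_def using r_le_n K four_block_carrier_mat[of K r r "0\<^sub>m 0 (n - r)" 0 "n - r"] by simp

lemma F_carrier: "F \<in> carrier_mat n r"
  unfolding F_def using U_carrier E_carrier \<Sigma>_carrier by auto

lemma H_carrier: "H \<in> carrier_mat r n"
  unfolding H_def using P_carrier U_carrier by auto

lemma adjoint_E: "mat_adjoint E = four_block_mat (1\<^sub>m r) (0\<^sub>m r (n - r)) (0\<^sub>m 0 r) (0\<^sub>m 0 (n - r))"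
  unfolding E_def by (subst mat_adjoint_four_block_mat) auto

lemma adjoint_P: "mat_adjoint P = four_block_mat (mat_adjoint K) (0\<^sub>m r 0) (mat_adjoint L) (0\<^sub>m (n - r) 0)"
  unfolding P_def using K L by (subst mat_adjoint_four_block_mat) auto

lemma adjoint_E_mult_E: "mat_adjoint E * E = 1\<^sub>m r"
  unfolding adjoint_E unfolding E_def by (subst row_block_mult_col_block) auto

lemma P_mult_adjoint_P: "P * mat_adjoint P = 1\<^sub>m r"
  unfolding adjoint_P unfolding P_def using K L KL by (subst row_block_mult_col_block) auto

lemma adjoint_\<Sigma>: "mat_adjoint \<Sigma> = \<Sigma>"
  unfolding \<Sigma>_def by (rule eq_matI) (auto simp: mat_diag_def)

lemma \<Sigma>_left_inverse: "mat_diag r (\<lambda>i. 1 / complex_of_real (\<sigma> i)) * \<Sigma> = 1\<^sub>m r"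
  unfolding \<Sigma>_def mat_diag_diag
  by (rule eq_matI) (auto simp: mat_diag_def \<sigma>_pos less_imp_neq[OF \<sigma>_pos, symmetric] simp flip: of_real_mult)

lemma invertible_\<Sigma>: "invertible_mat \<Sigma>"
  using invertible_mat_left_inverse[OF \<Sigma>_carrier _ \<Sigma>_left_inverse] by simp

lemma W_carrier: "W \<in> carrier_mat n n"
  unfolding W_def using U_carrier by auto

lemmas dims = carrier_matD[OF U_carrier] carrier_matD[OF E_carrier] carrier_matD[OF P_carrier] carrier_matD[OF \<Sigma>_carrier]
  carrier_matD[OF W_carrier] carrier_matD[OF K] carrier_matD[OF L]
  carrier_matD[OF G\<^sub>1] carrier_matD[OF G\<^sub>2] carrier_matD[OF G\<^sub>3] carrier_matD[OF G\<^sub>4]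

lemma A_factorization: "A = F * H"
proof -
  have "four_block_mat (\<Sigma> * K) (\<Sigma> * L) (0\<^sub>m (n - r) r) (0\<^sub>m (n - r) (n - r)) = E * (\<Sigma> * P)"
    unfolding P_def mult_row_block[OF \<Sigma>_carrier K L] unfolding E_def using \<Sigma>_carrier K L
    by (subst col_block_mult_row_block) auto
  then show ?thesis
    unfolding A_def F_def H_def using dims by (simp add: assoc_mult_mat_dim)
qed

lemma F_left_inverse: "\<exists>F' \<in> carrier_mat r n. F' * F = 1\<^sub>m r"
proof
  let ?D = "mat_diag r (\<lambda>i. 1 / complex_of_real (\<sigma> i))"
  have "?D * mat_adjoint E * mat_adjoint U * F = ?D * (mat_adjoint E * (mat_adjoint U * U) * E) * \<Sigma>"
    unfolding F_def using dims by (simp add: assoc_mult_mat_dim)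
  then show "?D * mat_adjoint E * mat_adjoint U * F = 1\<^sub>m r"
    using \<Sigma>_left_inverse dims by (simp add: U_adjoint_U adjoint_E_mult_E)
qed (use U_carrier E_carrier in auto)

lemma H_right_inverse: "\<exists>H' \<in> carrier_mat n r. H * H' = 1\<^sub>m r"
proof
  have "H * (U * mat_adjoint P) = P * (mat_adjoint U * U) * mat_adjoint P"
    unfolding H_def using dims by (simp add: assoc_mult_mat_dim)
  then show "H * (U * mat_adjoint P) = 1\<^sub>m r" using dims by (simp add: U_adjoint_U P_mult_adjoint_P)
qed (use U_carrier P_carrier in auto)

lemma adjoint_E_mult_W: "mat_adjoint E * W = four_block_mat G\<^sub>1 G\<^sub>2 (0\<^sub>m 0 r) (0\<^sub>m 0 (n - r))"
  unfolding adjoint_E W_def G_blocks[symmetric] using G\<^sub>1 G\<^sub>2 G\<^sub>3 G\<^sub>4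
  by (subst row_block_mult_four_block_mat) auto

lemma W_mult_adjoint_P: "W * mat_adjoint P = four_block_mat
    (G\<^sub>1 * mat_adjoint K + G\<^sub>2 * mat_adjoint L) (0\<^sub>m r 0) (G\<^sub>3 * mat_adjoint K + G\<^sub>4 * mat_adjoint L) (0\<^sub>m (n - r) 0)"
  unfolding adjoint_P W_def G_blocks[symmetric] using G\<^sub>1 G\<^sub>2 G\<^sub>3 G\<^sub>4 K L
  by (subst four_block_mat_mult_col_block) auto

lemma gram_F: "mat_adjoint F * mink_G n * F = \<Sigma> * G\<^sub>1 * \<Sigma>"
proof -
  have "mat_adjoint F * mink_G n * F = \<Sigma> * (mat_adjoint E * W * E) * \<Sigma>"
    unfolding F_def W_def using dims by (simp add: mat_adjoint_mult adjoint_\<Sigma> assoc_mult_mat_dim)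
  also have "mat_adjoint E * W * E = G\<^sub>1"
    unfolding adjoint_E_mult_W unfolding E_def using G\<^sub>1 G\<^sub>2
    by (subst row_block_mult_col_block) auto
  finally show ?thesis .
qed

lemma gram_H: "H * mink_G n * mat_adjoint H = \<Delta>"
  unfolding H_def \<Delta>_def adjoint_P[symmetric] P_def[symmetric] using dims
  by (simp add: mat_adjoint_mult assoc_mult_mat_dim)

lemma rank_A_mult_mink_adj: "vec_space.rank n (A * mink_adj A) = r \<longleftrightarrow> invertible_mat \<Delta>"
  using F_left_inverse rank_mult_mink_adj_factorization[OF F_carrier H_carrier]
  unfolding A_factorization gram_H by blast

lemma rank_mink_adj_mult_A: "vec_space.rank n (mink_adj A * A) = r \<longleftrightarrow> invertible_mat G\<^sub>1"
proof -
  have "vec_space.rank n (mink_adj A * A) = r \<longleftrightarrow> invertible_mat (\<Sigma> * G\<^sub>1 * \<Sigma>)"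
    using H_right_inverse rank_mink_adj_mult_factorization[OF F_carrier H_carrier]
    unfolding A_factorization gram_F by blast
  then show ?thesis
    using \<Sigma>_carrier G\<^sub>1 invertible_\<Sigma> by (simp add: invertible_mat_mult_iff[of _ r])
qed

lemma adjoint_P_mult_adjoint_E:
  assumes Y: "Y \<in> carrier_mat r r"
  shows "mat_adjoint P * Y * mat_adjoint E
    = four_block_mat (mat_adjoint K * Y) (0\<^sub>m r (n - r)) (mat_adjoint L * Y) (0\<^sub>m (n - r) (n - r))"
proof -
  have "Y * mat_adjoint E = four_block_mat Y (0\<^sub>m r (n - r)) (0\<^sub>m 0 r) (0\<^sub>m 0 (n - r))"
    unfolding adjoint_E using Y by (subst mult_row_block) auto
  then have "mat_adjoint P * Y * mat_adjoint E
      = mat_adjoint P * four_block_mat Y (0\<^sub>m r (n - r)) (0\<^sub>m 0 r) (0\<^sub>m 0 (n - r))"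
    using dims Y by (simp add: assoc_mult_mat_dim carrier_matD)
  also have "\<dots> = four_block_mat (mat_adjoint K * Y) (0\<^sub>m r (n - r)) (mat_adjoint L * Y) (0\<^sub>m (n - r) (n - r))"
    unfolding adjoint_P using K L Y by (subst col_block_mult_row_block) auto
  finally show ?thesis .
qed

lemma W_mult_adjoint_P_mult_adjoint_E_mult_W:
  assumes Y: "Y \<in> carrier_mat r r"
  defines "C\<^sub>1 \<equiv> G\<^sub>1 * mat_adjoint K + G\<^sub>2 * mat_adjoint L" and "C\<^sub>2 \<equiv> G\<^sub>3 * mat_adjoint K + G\<^sub>4 * mat_adjoint L"
  shows "W * mat_adjoint P * Y * (mat_adjoint E * W)
    = four_block_mat (C\<^sub>1 * (Y * G\<^sub>1)) (C\<^sub>1 * (Y * G\<^sub>2)) (C\<^sub>2 * (Y * G\<^sub>1)) (C\<^sub>2 * (Y * G\<^sub>2))"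
proof -
  have C: "C\<^sub>1 \<in> carrier_mat r r" "C\<^sub>2 \<in> carrier_mat (n - r) r"
    unfolding C\<^sub>1_def C\<^sub>2_def using G\<^sub>1 G\<^sub>2 G\<^sub>3 G\<^sub>4 K L by auto
  have "W * mat_adjoint P * Y * (mat_adjoint E * W)
      = four_block_mat C\<^sub>1 (0\<^sub>m r 0) C\<^sub>2 (0\<^sub>m (n - r) 0) * (Y * four_block_mat G\<^sub>1 G\<^sub>2 (0\<^sub>m 0 r) (0\<^sub>m 0 (n - r)))"
    unfolding W_mult_adjoint_P[folded C\<^sub>1_def C\<^sub>2_def, symmetric] adjoint_E_mult_W[symmetric]
    using dims Y by (simp add: assoc_mult_mat_dim carrier_matD)
  also have "\<dots> = four_block_mat (C\<^sub>1 * (Y * G\<^sub>1)) (C\<^sub>1 * (Y * G\<^sub>2)) (C\<^sub>2 * (Y * G\<^sub>1)) (C\<^sub>2 * (Y * G\<^sub>2))"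
    unfolding mult_row_block[OF Y G\<^sub>1 G\<^sub>2] using C Y G\<^sub>1 G\<^sub>2 by (subst col_block_mult_row_block) auto
  finally show ?thesis .
qed

context
  assumes inv_\<Delta>: "invertible_mat \<Delta>" and inv_G\<^sub>1: "invertible_mat G\<^sub>1"
begin

lemma \<Delta>_carrier: "\<Delta> \<in> carrier_mat r r"
  using gram_H H_carrier by auto

lemma invertible_G\<^sub>1_\<Sigma>_\<Delta>: "invertible_mat (G\<^sub>1 * \<Sigma> * \<Delta>)"
  and invertible_\<Sigma>_G\<^sub>1_\<Sigma>: "invertible_mat (\<Sigma> * G\<^sub>1 * \<Sigma>)"
  using G\<^sub>1 \<Sigma>_carrier \<Delta>_carrier inv_\<Delta> inv_G\<^sub>1 invertible_\<Sigma> by (simp_all add: invertible_mat_mult_iff[of _ r])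

lemma mat_inv_G\<^sub>1_\<Sigma>_\<Delta>: "mat_inv (G\<^sub>1 * \<Sigma> * \<Delta>) = mat_inv \<Delta> * mat_inv (\<Sigma> * G\<^sub>1 * \<Sigma>) * \<Sigma>"
proof (rule mat_inv_eqI)
  let ?M = "\<Sigma> * G\<^sub>1 * \<Sigma>"
  note \<Delta>' = mat_inv[OF \<Delta>_carrier inv_\<Delta>] and M' = mat_inv[OF _ invertible_\<Sigma>_G\<^sub>1_\<Sigma>, of r]
  have M'_dims: "dim_row (mat_inv ?M) = r" "dim_col (mat_inv ?M) = r"
    using M' \<Sigma>_carrier G\<^sub>1 by auto
  have "mat_inv \<Delta> * mat_inv ?M * \<Sigma> * (G\<^sub>1 * \<Sigma> * \<Delta>) = mat_inv \<Delta> * (mat_inv ?M * ?M) * \<Delta>"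
    using dims carrier_matD[OF \<Delta>_carrier] carrier_matD[OF \<Delta>'(1)] M'_dims by (simp add: assoc_mult_mat_dim)
  also have "\<dots> = 1\<^sub>m r"
    using M' \<Delta>' \<Sigma>_carrier G\<^sub>1 carrier_matD[OF \<Delta>_carrier] by simp
  finally show "mat_inv \<Delta> * mat_inv ?M * \<Sigma> * (G\<^sub>1 * \<Sigma> * \<Delta>) = 1\<^sub>m r" .
qed (use G\<^sub>1 \<Sigma>_carrier \<Delta>_carrier mat_inv[OF \<Delta>_carrier inv_\<Delta>]
      mat_inv[OF _ invertible_\<Sigma>_G\<^sub>1_\<Sigma>, of r] in auto)

lemma mat_inv_\<Sigma>_\<Delta>: "mat_inv (\<Sigma> * \<Delta>) = mat_inv (G\<^sub>1 * \<Sigma> * \<Delta>) * G\<^sub>1"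
proof (rule mat_inv_eqI)
  note Z' = mat_inv[OF _ invertible_G\<^sub>1_\<Sigma>_\<Delta>, of r]
  have "mat_inv (G\<^sub>1 * \<Sigma> * \<Delta>) \<in> carrier_mat r r" using Z' G\<^sub>1 \<Sigma>_carrier \<Delta>_carrier by auto
  then show "mat_inv (G\<^sub>1 * \<Sigma> * \<Delta>) * G\<^sub>1 * (\<Sigma> * \<Delta>) = 1\<^sub>m r"
    using Z' G\<^sub>1 \<Sigma>_carrier \<Delta>_carrier by (simp add: assoc_mult_mat_dim carrier_matD)
qed (use G\<^sub>1 \<Sigma>_carrier \<Delta>_carrier mat_inv[OF _ invertible_G\<^sub>1_\<Sigma>_\<Delta>, of r] in auto)

lemma is_mink_inv_A: "is_mink_inv A (mink_inv A)"
  and mink_inv_A_eq: "mink_inv A = mink_G n * U * (mat_adjoint P * mat_inv (G\<^sub>1 * \<Sigma> * \<Delta>) * mat_adjoint E) * mat_adjoint U * mink_G n"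
proof -
  let ?M = "\<Sigma> * G\<^sub>1 * \<Sigma>"
  let ?X = "mink_G n * mat_adjoint H * mat_inv \<Delta> * mat_inv ?M * mat_adjoint F * mink_G n"
  have "is_mink_inv A ?X"
    using is_mink_inv_factorization[OF F_carrier H_carrier] invertible_\<Sigma>_G\<^sub>1_\<Sigma> inv_\<Delta>
    unfolding A_factorization gram_F gram_H by blast
  moreover have "A \<in> carrier_mat n n" unfolding A_factorization using F_carrier H_carrier by auto
  ultimately have "mink_inv A = ?X" by (rule mink_inv_eqI[rotated])
  also have "\<dots> = mink_G n * U * (mat_adjoint P * (mat_inv \<Delta> * mat_inv ?M * \<Sigma>) * mat_adjoint E) * mat_adjoint U * mink_G n"
    unfolding F_def H_def
    using dims carrier_matD[OF mat_inv_carrier[OF \<Delta>_carrier inv_\<Delta>]]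
      carrier_matD[OF mat_inv_carrier[OF _ invertible_\<Sigma>_G\<^sub>1_\<Sigma>, of r]] \<Sigma>_carrier G\<^sub>1
    by (simp add: mat_adjoint_mult adjoint_\<Sigma> assoc_mult_mat_dim)
  finally show "mink_inv A = mink_G n * U * (mat_adjoint P * mat_inv (G\<^sub>1 * \<Sigma> * \<Delta>) * mat_adjoint E) * mat_adjoint U * mink_G n"
    unfolding mat_inv_G\<^sub>1_\<Sigma>_\<Delta> .
  show "is_mink_inv A (mink_inv A)" using \<open>is_mink_inv A ?X\<close> \<open>mink_inv A = ?X\<close> by simp
qed

lemma mink_inv_A_block_form_G:
  "mink_inv A = mink_G n * U * four_block_mat
      (mat_adjoint K * mat_inv (G\<^sub>1 * \<Sigma> * \<Delta>)) (0\<^sub>m r (n - r))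
      (mat_adjoint L * mat_inv (G\<^sub>1 * \<Sigma> * \<Delta>)) (0\<^sub>m (n - r) (n - r)) * mat_adjoint U * mink_G n"
  unfolding mink_inv_A_eq using mat_inv_carrier[OF _ invertible_G\<^sub>1_\<Sigma>_\<Delta>, of r] G\<^sub>1 \<Sigma>_carrier \<Delta>_carrier
  by (subst adjoint_P_mult_adjoint_E) auto

lemma mink_inv_A_block_form_U:
  "mink_inv A = U * four_block_mat
      ((G\<^sub>1 * mat_adjoint K + G\<^sub>2 * mat_adjoint L) * mat_inv (\<Sigma> * \<Delta>))
      ((G\<^sub>1 * mat_adjoint K + G\<^sub>2 * mat_adjoint L) * mat_inv (G\<^sub>1 * \<Sigma> * \<Delta>) * G\<^sub>2)
      ((G\<^sub>3 * mat_adjoint K + G\<^sub>4 * mat_adjoint L) * mat_inv (\<Sigma> * \<Delta>))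
      ((G\<^sub>3 * mat_adjoint K + G\<^sub>4 * mat_adjoint L) * mat_inv (G\<^sub>1 * \<Sigma> * \<Delta>) * G\<^sub>2)
    * mat_adjoint U"
proof -
  let ?Z = "mat_inv (G\<^sub>1 * \<Sigma> * \<Delta>)"
  have Z: "?Z \<in> carrier_mat r r" using mat_inv_carrier[OF _ invertible_G\<^sub>1_\<Sigma>_\<Delta>, of r] G\<^sub>1 \<Sigma>_carrier \<Delta>_carrier by auto
  have "U * W = U * mat_adjoint U * mink_G n * U" "W * mat_adjoint U = mat_adjoint U * mink_G n * (U * mat_adjoint U)"
    unfolding W_def using dims by (simp_all add: assoc_mult_mat_dim)
  then have "mink_G n * U = U * W" "mat_adjoint U * mink_G n = W * mat_adjoint U"
    using dims by (simp_all add: U_U_adjoint)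
  then have "mink_inv A = U * (W * mat_adjoint P * ?Z * (mat_adjoint E * W)) * mat_adjoint U"
    unfolding mink_inv_A_eq using dims carrier_matD[OF Z] by (simp add: assoc_mult_mat_dim)
  then show ?thesis
    unfolding W_mult_adjoint_P_mult_adjoint_E_mult_W[OF Z] mat_inv_\<Sigma>_\<Delta>
    using dims carrier_matD[OF Z] by (simp add: assoc_mult_mat_dim)
qed

end

end

theorem theorem7p1:
  fixes n r :: nat and A U K L G1 G2 G3 G4 :: "complex mat" and \<sigma> :: "nat \<Rightarrow> real"
  assumes rn: "r \<le> n"
    and A: "A \<in> carrier_mat n n" and rankA: "vec_space.rank n A = r"
    and U: "unitary_mat n U"
    and \<sigma>: "\<And>i. i < r \<Longrightarrow> \<sigma> i > 0"
    and K: "K \<in> carrier_mat r r" and L: "L \<in> carrier_mat r (n - r)"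
    and KL: "K * mat_adjoint K + L * mat_adjoint L = 1\<^sub>m r"
    and \<Sigma>_def: "\<Sigma> \<equiv> mat_diag r (\<lambda>i. complex_of_real (\<sigma> i))"
    and HS: "A = U * four_block_mat (\<Sigma> * K) (\<Sigma> * L) (0\<^sub>m (n - r) r) (0\<^sub>m (n - r) (n - r)) * mat_adjoint U"
    and G1: "G1 \<in> carrier_mat r r" and G2: "G2 \<in> carrier_mat r (n - r)"
    and G3: "G3 \<in> carrier_mat (n - r) r" and G4: "G4 \<in> carrier_mat (n - r) (n - r)"
    and Gblk: "four_block_mat G1 G2 G3 G4 = mat_adjoint U * mink_G n * U"
    and \<Delta>_def: "\<Delta> \<equiv> four_block_mat K L (0\<^sub>m 0 r) (0\<^sub>m 0 (n - r)) * (mat_adjoint U * mink_G n * U)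
                    * four_block_mat (mat_adjoint K) (0\<^sub>m r 0) (mat_adjoint L) (0\<^sub>m (n - r) 0)"
  shows "(vec_space.rank n A = vec_space.rank n (A * mink_adj A) \<longleftrightarrow> invertible_mat \<Delta>)
    \<and> (vec_space.rank n A = vec_space.rank n (mink_adj A * A) \<longleftrightarrow> invertible_mat G1)
    \<and> (invertible_mat \<Delta> \<and> invertible_mat G1 \<longrightarrow>
         is_mink_inv A (mink_inv A)
       \<and> mink_inv A = mink_G n * U * four_block_mat
              (mat_adjoint K * mat_inv (G1 * \<Sigma> * \<Delta>)) (0\<^sub>m r (n - r))
              (mat_adjoint L * mat_inv (G1 * \<Sigma> * \<Delta>)) (0\<^sub>m (n - r) (n - r))
              * mat_adjoint U * mink_G n
       \<and> mink_inv A = U * four_block_mat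
              ((G1 * mat_adjoint K + G2 * mat_adjoint L) * mat_inv (\<Sigma> * \<Delta>))
              ((G1 * mat_adjoint K + G2 * mat_adjoint L) * mat_inv (G1 * \<Sigma> * \<Delta>) * G2)
              ((G3 * mat_adjoint K + G4 * mat_adjoint L) * mat_inv (\<Sigma> * \<Delta>))
              ((G3 * mat_adjoint K + G4 * mat_adjoint L) * mat_inv (G1 * \<Sigma> * \<Delta>) * G2)
              * mat_adjoint U)"
proof -
  interpret hartwig_spindelboeck n r A U K L G1 G2 G3 G4 \<Sigma> \<Delta> \<sigma>
    by unfold_locales (use assms in \<open>simp_all only: \<Sigma>_def \<Delta>_def\<close>)
  show ?thesis
    using rank_A_mult_mink_adj rank_mink_adj_mult_A is_mink_inv_A mink_inv_A_block_form_G
      mink_inv_A_block_form_U rankA by auto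
qed

end
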